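(* Let $n>5$ be prime and let $\gamma$ be a probability distribution on $\mathbb{Z}_n$ with $\gamma(k)\in\mathbb{Q}$ for all $k$. Suppose $\hat{\gamma}(x)=\hat{\gamma}(y)$ for some $x,y\in\mathbb{Z}_n\setminus\{0\}$, and let $f_1,f_2:\mathbb{Z}_n\to\{0,1\}$ satisfy $f_1(k)=f_2(x^{-1}yk)$ for all $k$ (operations in the field $\mathbb{Z}_n$). Then, for the random walk $v(t)$ with step distribution $\gamma$, the sequences $\{f_1(v(t))\}_{t\ge1}$ and $\{f_2(v(t))\}_{t\ge1}$ have the same distribution.
   Context: $\hat{\gamma}(x)=\sum_{k\in\mathbb{Z}_n}\omega_n^{kx}\gamma(k)$ with $\omega_n=e^{-2\pi i/n}$. The random walk $v(t)$ has $v(1)$ uniform on $\mathbb{Z}_n$ and independent steps with $\mathbb{P}(v(t+1)-v(t)=k)=\gamma(k)$. *)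

theory Defs
  imports "HOL-Probability.Probability"
begin

text \<open>Elements of Z_n are represented by the naturals 0..n-1; a probability
distribution gamma on Z_n is a nat pmf supported in {..<n}.\<close>

definition fourier :: "nat \<Rightarrow> nat pmf \<Rightarrow> nat \<Rightarrow> complex" where
  "fourier n \<gamma> x = (\<Sum>k<n. exp (- 2 * of_real pi * \<i> * of_nat (k * x) / of_nat n) * of_real (pmf \<gamma> k))"

definition zn_inv :: "nat \<Rightarrow> nat \<Rightarrow> nat" where
  "zn_inv n x = (SOME z. z < n \<and> (x * z) mod n = 1)"

text \<open>walk_from n gamma T v: law of (v(1),...,v(T)) given v(1) = v.\<close>
fun walk_from :: "nat \<Rightarrow> nat pmf \<Rightarrow> nat \<Rightarrow> nat \<Rightarrow> nat list pmf" where
  "walk_from n \<gamma> 0 v = return_pmf []"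
| "walk_from n \<gamma> (Suc T) v =
     bind_pmf \<gamma> (\<lambda>k. map_pmf (\<lambda>vs. v # vs) (walk_from n \<gamma> T ((v + k) mod n)))"

definition walk :: "nat \<Rightarrow> nat pmf \<Rightarrow> nat \<Rightarrow> nat list pmf" where
  "walk n \<gamma> T = bind_pmf (pmf_of_set {..<n}) (walk_from n \<gamma> T)"

end

theory Submission
  imports Defs "HOL-Computational_Algebra.Polynomial_Factorial" "HOL-Number_Theory.Cong"
begin

text \<open>Let \<open>\<zeta>\<close> be a primitive \<open>n\<close>-th root of unity. Reindexing the sum by \<open>k \<mapsto> x k\<close> turns the
  Fourier coefficient at \<open>x\<close> into \<open>\<Sum>m. \<zeta>^m \<gamma>(x\<^sup>-\<^sup>1 m)\<close>, so equality of the coefficients at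
  \<open>x\<close> and \<open>y\<close> is a linear relation among \<open>1, \<zeta>, \<dots>, \<zeta>^(n-1)\<close> with the rational coefficients
  \<open>\<gamma>(x\<^sup>-\<^sup>1 m) - \<gamma>(y\<^sup>-\<^sup>1 m)\<close>. For prime \<open>n\<close> the polynomial \<open>1 + X + \<dots> + X^(n-1)\<close> is
  irreducible (Eisenstein's criterion at \<open>X + 1\<close>), so in every such relation all coefficients are
  equal; the one at \<open>m = 0\<close> vanishes, hence all do, i.e. \<open>\<gamma>\<close> is invariant under multiplication
  by \<open>a = x\<^sup>-\<^sup>1 y\<close>. Multiplication by \<open>a\<close> is an additive automorphism of \<open>\<int>\<^sub>n\<close> preserving the
  uniform start and the step law, so it maps the walk to a walk with the same law; as
  \<open>f\<^sub>1 = f\<^sub>2 \<circ> (a \<cdot>)\<close>, the two observed sequences have the same law.\<close>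

section \<open>Irreducibility of the cyclotomic polynomial of prime order\<close>

lemma eisenstein_cofactor_degree_eq_0:
  fixes G H :: "'a :: idom poly" and p :: 'a
  assumes p: "prime_elem p"
    and dvd_coeff: "\<forall>i<degree (G * H). p dvd coeff (G * H) i"
    and not_dvd_coeff_0: "\<not> p^2 dvd coeff (G * H) 0"
    and not_dvd_lead: "\<not> p dvd lead_coeff (G * H)"
    and dvd_G0: "p dvd coeff G 0"
  shows "degree H = 0"
proof (rule ccontr)
  assume "degree H \<noteq> 0"
  have nonzero: "G \<noteq> 0" "H \<noteq> 0" using not_dvd_lead by auto
  have not_dvd_H0: "\<not> p dvd coeff H 0"
  proof
    assume "p dvd coeff H 0"
    then have "p * p dvd coeff G 0 * coeff H 0" using dvd_G0 by (simp add: mult_dvd_mono)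
    then show False using not_dvd_coeff_0 by (simp add: coeff_mult power2_eq_square)
  qed
  have "\<not> p dvd lead_coeff G" using not_dvd_lead by (auto simp: lead_coeff_mult dvd_mult2)
  define i where "i = (LEAST i. \<not> p dvd coeff G i)"
  have not_dvd_Gi: "\<not> p dvd coeff G i"
    unfolding i_def by (rule LeastI) (rule \<open>\<not> p dvd lead_coeff G\<close>)
  have "i \<le> degree G"
    unfolding i_def by (rule Least_le) (rule \<open>\<not> p dvd lead_coeff G\<close>)
  have dvd_below: "p dvd coeff G j" if "j < i" for j
    using that unfolding i_def by (rule not_less_Least[THEN not_not[THEN iffD1]])
  have "i < degree (G * H)"
    using \<open>i \<le> degree G\<close> \<open>degree H \<noteq> 0\<close> nonzero by (simp add: degree_mult_eq)
  then have "p dvd coeff (G * H) i" using dvd_coeff by simp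
  moreover have "coeff (G * H) i = coeff G i * coeff H 0 + (\<Sum>j<i. coeff G j * coeff H (i - j))"
    by (simp add: coeff_mult lessThan_Suc_atMost[symmetric])
  moreover have "p dvd (\<Sum>j<i. coeff G j * coeff H (i - j))"
    by (intro dvd_sum) (simp add: dvd_below)
  ultimately have "p dvd coeff G i * coeff H 0" by (simp add: dvd_add_left_iff)
  then show False using p not_dvd_Gi not_dvd_H0 by (simp add: prime_elem_dvd_mult_iff)
qed

lemma eisenstein_criterion:
  fixes G H :: "'a :: idom poly" and p :: 'a
  assumes "prime_elem p"
    and "\<forall>i<degree (G * H). p dvd coeff (G * H) i"
    and "\<not> p^2 dvd coeff (G * H) 0"
    and "\<not> p dvd lead_coeff (G * H)"
  shows "degree G = 0 \<or> degree H = 0"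
proof (cases "degree G = 0 \<or> degree H = 0")
  case False
  then have "G \<noteq> 0" "H \<noteq> 0" by auto
  with False have "0 < degree (G * H)" by (simp add: degree_mult_eq)
  then have "p dvd coeff G 0 * coeff H 0" using assms(2) by (auto simp: coeff_mult)
  then have "p dvd coeff G 0 \<or> p dvd coeff H 0" using assms(1) by (simp add: prime_elem_dvd_mult_iff)
  then show ?thesis
    using eisenstein_cofactor_degree_eq_0[OF assms]
      eisenstein_cofactor_degree_eq_0[of p H G] assms by (auto simp: mult.commute)
qed simp

definition geom_poly :: "nat \<Rightarrow> int poly" where
  "geom_poly n = (\<Sum>k<n. monom 1 k)"

lemma coeff_geom_poly: "coeff (geom_poly n) i = (if i < n then 1 else 0)"
  by (simp add: geom_poly_def coeff_sum coeff_monom)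

lemma degree_geom_poly: "degree (geom_poly n) = n - 1"
proof (rule antisym)
  show "degree (geom_poly n) \<le> n - 1" by (rule degree_le) (auto simp: coeff_geom_poly)
  show "n - 1 \<le> degree (geom_poly n)"
    by (cases n) (simp_all add: le_degree coeff_geom_poly)
qed

lemma lead_coeff_geom_poly: "n > 0 \<Longrightarrow> lead_coeff (geom_poly n) = 1"
  by (simp add: degree_geom_poly coeff_geom_poly)

lemma geom_poly_times_X_minus_1: "n > 0 \<Longrightarrow> [:-1, 1:] * geom_poly n = monom 1 n - 1"
  by (rule poly_eqI) (simp add: coeff_geom_poly coeff_monom coeff_1 coeff_pCons split: nat.split)

lemma pcompose_power: "pcompose (p ^ k) r = pcompose p r ^ k"
  by (induction k) (simp_all add: pcompose_1 pcompose_mult)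

lemma coeff_geom_poly_shift:
  assumes "i < n"
  shows "coeff (pcompose (geom_poly n) [:1, 1:]) i = int (n choose Suc i)"
proof -
  have "pCons 0 (pcompose (geom_poly n) [:1, 1:]) = pcompose ([:-1, 1:] * geom_poly n) [:1, 1:]"
    by (simp only: pcompose_mult) (simp add: pcompose_pCons)
  also have "\<dots> = pcompose (monom 1 n - 1) [:1, 1:]"
    using assms by (subst geom_poly_times_X_minus_1) simp_all
  also have "\<dots> = [:1, 1:] ^ n - 1"
    by (simp add: pcompose_diff monom_altdef pcompose_1 pcompose_power pcompose_pCons)
  finally have "coeff (pcompose (geom_poly n) [:1, 1:]) i = coeff ([:1, 1:] ^ n - 1) (Suc i)"
    by (metis coeff_pCons_Suc)
  then show ?thesis using assms by (simp add: coeff_linear_poly_power coeff_1)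
qed

text \<open>For prime \<open>n\<close> this is the cyclotomic polynomial; Eisenstein's criterion applies to
  \<open>geom_poly n (X + 1)\<close>, whose coefficients are the binomial coefficients \<open>n choose (i + 1)\<close>.\<close>
lemma irreducible_geom_poly:
  assumes "prime n"
  shows "irreducible (geom_poly n)"
proof (rule irreducibleI)
  have "n > 1" using assms prime_gt_1_nat by blast
  then have "degree (geom_poly n) \<noteq> 0" by (simp add: degree_geom_poly)
  then show "geom_poly n \<noteq> 0" and "\<not> is_unit (geom_poly n)"
    by (auto simp: is_unit_poly_iff)
  fix G H assume GH: "geom_poly n = G * H"
  let ?shift = "\<lambda>p. pcompose p [:1, 1:]"
  have shift_GH: "?shift G * ?shift H = ?shift (geom_poly n)"
    by (simp add: GH pcompose_mult)
  have degree_shift: "degree (?shift G * ?shift H) = n - 1"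
    by (simp only: shift_GH degree_pcompose degree_geom_poly) simp
  have "degree (?shift G) = 0 \<or> degree (?shift H) = 0"
  proof (rule eisenstein_criterion)
    show "prime_elem (int n)" using assms by simp
    show "\<forall>i<degree (?shift G * ?shift H). int n dvd coeff (?shift G * ?shift H) i"
    proof (intro allI impI)
      fix i assume "i < degree (?shift G * ?shift H)"
      then have "Suc i < n" using degree_shift by simp
      then show "int n dvd coeff (?shift G * ?shift H) i"
        using dvd_choose_prime[OF \<open>Suc i < n\<close> _ _ assms]
        by (simp add: coeff_geom_poly_shift shift_GH)
    qed
    have "coeff (?shift G * ?shift H) 0 = int n"
      using coeff_geom_poly_shift[of 0 n] \<open>n > 1\<close> by (simp only: shift_GH) simp
    then show "\<not> (int n)^2 dvd coeff (?shift G * ?shift H) 0"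
      using \<open>n > 1\<close> by (simp only:) (simp add: power2_eq_square)
    show "\<not> int n dvd lead_coeff (?shift G * ?shift H)"
      using \<open>n > 1\<close> degree_shift by (simp add: coeff_geom_poly_shift shift_GH)
  qed
  then have "degree G = 0 \<or> degree H = 0" by (simp add: degree_pcompose)
  moreover have "lead_coeff G * lead_coeff H = 1"
    using lead_coeff_geom_poly[of n] \<open>n > 1\<close> by (simp add: GH lead_coeff_mult)
  ultimately show "is_unit G \<or> is_unit H"
    by (metis degree_eq_zeroE is_unit_poly_iff lead_coeff_pCons(2) pCons_0_0 coeff_pCons_0
        dvd_triv_left dvd_triv_right)
qed

section \<open>Rational relations between powers of a root of unity\<close>

lemma map_poly_of_int_add:
  "map_poly of_int (p + q) = (map_poly of_int p + map_poly of_int q :: 'a :: comm_ring_1 poly)"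
  by (rule poly_eqI) (simp add: coeff_map_poly)

lemma map_poly_of_int_mult:
  "map_poly of_int (p * q) = (map_poly of_int p * map_poly of_int q :: 'a :: comm_ring_1 poly)"
  by (rule poly_eqI) (simp add: coeff_map_poly coeff_mult)

lemma map_poly_of_int_smult:
  "map_poly of_int (smult a p) = (smult (of_int a) (map_poly of_int p) :: 'a :: comm_ring_1 poly)"
  by (rule poly_eqI) (simp add: coeff_map_poly)

text \<open>Pseudo-division stands in for division over \<open>\<rat>\<close>, so no Gauss lemma is needed.\<close>
lemma prime_poly_dvd_least_degree_root_poly:
  fixes P s :: "int poly" and z :: "'a :: field_char_0"
  assumes P: "prime_elem P" "poly (map_poly of_int P) z = 0"
    and s: "s \<noteq> 0" "poly (map_poly of_int s) z = 0"
    and least: "\<And>R. R \<noteq> 0 \<Longrightarrow> poly (map_poly of_int R) z = 0 \<Longrightarrow> degree s \<le> degree R"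
  shows "P dvd s"
proof -
  obtain a q where "a \<noteq> 0" and division: "smult a P = s * q + pseudo_mod P s"
    using pseudo_mod(1)[OF \<open>s \<noteq> 0\<close>] by blast
  have "poly (map_poly of_int (pseudo_mod P s)) z = 0"
    using arg_cong[OF division, of "\<lambda>p. poly (map_poly of_int p) z"] P s
    by (simp add: map_poly_of_int_add map_poly_of_int_mult map_poly_of_int_smult)
  then have "pseudo_mod P s = 0"
    using pseudo_mod(2)[OF \<open>s \<noteq> 0\<close>, of P] least[of "pseudo_mod P s"] by (meson leD)
  with division have "P dvd s * q" using dvd_smult[OF dvd_refl, of P a] by simp
  moreover have "\<not> P dvd q"
  proof
    assume "P dvd q"
    then obtain t where "q = P * t" by (elim dvdE)
    have "P \<noteq> 0" using P(1) by auto
    have "[:a:] * P = (s * t) * P"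
      using division \<open>pseudo_mod P s = 0\<close> \<open>q = P * t\<close> by (simp add: ac_simps)
    then have "[:a:] = s * t" using mult_right_cancel[OF \<open>P \<noteq> 0\<close>] by blast
    moreover from this have "t \<noteq> 0" using \<open>a \<noteq> 0\<close> by auto
    ultimately have "degree s + degree t = 0" using s(1) by (metis degree_mult_eq degree_pCons_0)
    then have "degree s = 0" by simp
    then obtain c where "s = [:c:]" by (elim degree_eq_zeroE)
    then show False using s by (simp add: map_poly_pCons)
  qed
  ultimately show ?thesis using P(1) by (blast dest: prime_elem_dvd_multD)
qed

lemma degree_le_if_prime_poly_common_root:
  fixes P r :: "int poly" and z :: "'a :: field_char_0"
  assumes P: "prime_elem P" "poly (map_poly of_int P) z = 0"
    and r: "r \<noteq> 0" "poly (map_poly of_int r) z = 0"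
  shows "degree P \<le> degree r"
proof -
  define S where "S = {s. s \<noteq> 0 \<and> poly (map_poly of_int s) z = (0 :: 'a)}"
  obtain s where "s \<in> S" and least: "\<And>R. R \<in> S \<Longrightarrow> degree s \<le> degree R"
    using ex_has_least_nat[of "\<lambda>s. s \<in> S" r degree] r by (auto simp: S_def)
  then have "P dvd s" using P by (intro prime_poly_dvd_least_degree_root_poly) (auto simp: S_def)
  then have "degree P \<le> degree s" using \<open>s \<in> S\<close> by (auto simp: S_def intro: dvd_imp_degree_le)
  also have "degree s \<le> degree r" using least r by (simp add: S_def)
  finally show ?thesis .
qed

lemma sum_powers_root_of_unity:
  fixes z :: "'a :: field"
  assumes "z \<noteq> 1" "z ^ n = 1"
  shows "(\<Sum>k<n. z ^ k) = 0"
  using assms by (simp add: sum_gp_strict)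

lemma poly_geom_poly:
  fixes z :: "'a :: comm_ring_1"
  shows "poly (map_poly of_int (geom_poly n)) z = (\<Sum>k<n. z ^ k)"
proof -
  have "map_poly of_int (geom_poly n) = (\<Sum>k<n. monom 1 k :: 'a poly)"
    by (rule poly_eqI) (simp add: coeff_map_poly coeff_geom_poly coeff_sum coeff_monom)
  then show ?thesis by (simp add: poly_sum poly_monom)
qed

lemma degree_ge_if_root_of_unity:
  fixes z :: "'a :: field_char_0" and r :: "int poly"
  assumes "prime n" "z \<noteq> 1" "z ^ n = 1"
    and "r \<noteq> 0" "poly (map_poly of_int r) z = 0"
  shows "n - 1 \<le> degree r"
proof -
  have "prime_elem (geom_poly n)"
    using assms(1) by (intro irreducible_imp_prime_poly irreducible_geom_poly)
  moreover have "poly (map_poly of_int (geom_poly n)) z = 0"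
    using assms(2,3) by (simp add: poly_geom_poly sum_powers_root_of_unity)
  ultimately have "degree (geom_poly n) \<le> degree r"
    using degree_le_if_prime_poly_common_root assms(4,5) by blast
  then show ?thesis by (simp add: degree_geom_poly)
qed

lemma int_relation_root_of_unity_const:
  fixes z :: "'a :: field_char_0" and N :: "nat \<Rightarrow> int"
  assumes "prime n" "z \<noteq> 1" "z ^ n = 1"
    and relation: "(\<Sum>m<n. of_int (N m) * z ^ m) = 0"
    and "m < n"
  shows "N m = N (n - 1)"
proof -
  have "n > 1" using assms(1) prime_gt_1_nat by blast
  define q :: "int poly" where "q = (\<Sum>m<n - 1. monom (N m - N (n - 1)) m)"
  have coeff_q: "coeff q i = (if i < n - 1 then N i - N (n - 1) else 0)" for i
    by (simp add: q_def coeff_sum coeff_monom)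
  have "map_poly of_int q = (\<Sum>m<n - 1. monom (of_int (N m - N (n - 1))) m :: 'a poly)"
    by (rule poly_eqI) (simp add: coeff_map_poly coeff_q coeff_sum coeff_monom)
  then have "poly (map_poly of_int q) z = (\<Sum>m<n - 1. of_int (N m - N (n - 1)) * z ^ m)"
    by (simp add: poly_sum poly_monom)
  also have "\<dots> = (\<Sum>m<n. of_int (N m - N (n - 1)) * z ^ m)"
  proof -
    have "{..<n} = insert (n - 1) {..<n - 1}" using \<open>n > 1\<close> by auto
    then show ?thesis by simp
  qed
  also have "\<dots> = (\<Sum>m<n. of_int (N m) * z ^ m) - of_int (N (n - 1)) * (\<Sum>m<n. z ^ m)"
    by (simp add: algebra_simps sum_subtractf sum_distrib_left sum_distrib_right)
  also have "\<dots> = 0" using relation assms(2,3) by (simp add: sum_powers_root_of_unity)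
  finally have "q = 0"
    using degree_ge_if_root_of_unity[OF assms(1-3), of q] degree_le[of "n - 2" q] \<open>n > 1\<close>
    by (force simp: coeff_q)
  then show ?thesis
    using \<open>m < n\<close> coeff_q[of m] by (cases "m = n - 1") (auto split: if_splits)
qed

lemma Rats_common_denominator:
  fixes A :: "'a :: field_char_0 set"
  assumes "finite A" "A \<subseteq> \<rat>"
  obtains D :: int where "D > 0" "\<And>x. x \<in> A \<Longrightarrow> of_int D * x \<in> \<int>"
  using assms
proof (induction A arbitrary: thesis rule: finite_induct)
  case empty
  then show ?case using empty.prems(1)[of 1] by simp
next
  case (insert x A)
  then obtain D where D: "D > 0" "\<And>y. y \<in> A \<Longrightarrow> of_int D * y \<in> \<int>" by blast
  from insert.prems obtain a b where "b > 0" "x = of_int a / of_int b" by (auto elim: Rats_cases')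
  have "of_int (D * b) * y \<in> \<int>" if "y \<in> insert x A" for y
  proof (cases "y = x")
    case True
    then show ?thesis using \<open>b > 0\<close> \<open>x = of_int a / of_int b\<close> by simp
  next
    case False
    then have "of_int b * (of_int D * y) \<in> \<int>" using D(2) that by simp
    then show ?thesis by (simp add: ac_simps)
  qed
  moreover have "D * b > 0" using D(1) \<open>b > 0\<close> by simp
  ultimately show ?case using insert.prems(1) by blast
qed

lemma rational_relation_root_of_unity_const:
  fixes z :: "'a :: field_char_0" and c :: "nat \<Rightarrow> 'a"
  assumes "prime n" "z \<noteq> 1" "z ^ n = 1"
    and rational: "\<And>m. c m \<in> \<rat>"
    and relation: "(\<Sum>m<n. c m * z ^ m) = 0"
    and "m < n"
  shows "c m = c (n - 1)"
proof -
  obtain D :: int where "D > 0" and D: "\<And>x. x \<in> c ` {..<n} \<Longrightarrow> of_int D * x \<in> \<int>"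
    using Rats_common_denominator[of "c ` {..<n}"] rational by blast
  define N where "N k = (SOME N. of_int D * c k = of_int N)" for k
  have N: "of_int (N k) = of_int D * c k" if "k < n" for k
    using D[of "c k"] that unfolding N_def by (auto elim!: Ints_cases intro: someI)
  have "(\<Sum>k<n. of_int (N k) * z ^ k) = of_int D * (\<Sum>k<n. c k * z ^ k)"
    by (simp add: N sum_distrib_left mult.assoc)
  then have "N m = N (n - 1)"
    using int_relation_root_of_unity_const[OF assms(1-3) _ \<open>m < n\<close>] relation by simp
  then show ?thesis using N[of m] N[of "n - 1"] \<open>m < n\<close> \<open>D > 0\<close> by auto
qed

section \<open>Fourier coefficients and multiplicative symmetry\<close>

lemma zn_inv:
  assumes "prime n" "u \<in> {1..<n}"
  shows "zn_inv n u < n" "(u * zn_inv n u) mod n = 1"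
proof -
  have "\<not> n dvd u" using assms(2) by (auto dest: dvd_imp_le)
  then have "coprime u n" using assms(1) prime_imp_coprime coprime_commute by blast
  then obtain v where "[u * v = 1] (mod n)" using cong_solve_coprime_nat by auto
  then have "(u * (v mod n)) mod n = 1"
    using prime_gt_1_nat[OF assms(1)] by (simp add: cong_def mod_mult_right_eq)
  moreover have "v mod n < n" using assms(1) prime_gt_0_nat by simp
  ultimately have "\<exists>w. w < n \<and> (u * w) mod n = 1" by blast
  then have "zn_inv n u < n \<and> (u * zn_inv n u) mod n = 1"
    unfolding zn_inv_def by (rule someI_ex)
  then show "zn_inv n u < n" "(u * zn_inv n u) mod n = 1" by auto
qed

lemma mod_mult_inverse_cancel:
  fixes u v n k :: nat
  assumes "(u * v) mod n = 1"
  shows "(v * ((u * k) mod n)) mod n = k mod n"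
proof -
  have "(v * ((u * k) mod n)) mod n = (v * (u * k)) mod n"
    by (simp add: mod_mult_right_eq)
  also have "\<dots> = ((u * v) * k) mod n"
    by (simp add: ac_simps)
  also have "\<dots> = (((u * v) mod n) * k) mod n" by (rule mod_mult_left_eq[symmetric])
  also have "\<dots> = k mod n" using assms by simp
  finally show ?thesis .
qed

lemma bij_betw_mult_mod:
  fixes u v n :: nat
  assumes "(u * v) mod n = 1"
  shows "bij_betw (\<lambda>k. (u * k) mod n) {..<n} {..<n}"
proof (rule bij_betwI[where g = "\<lambda>k. (v * k) mod n"])
  have "(v * u) mod n = 1" using assms by (simp only: mult.commute)
  then show "(u * ((v * k) mod n)) mod n = k" if "k \<in> {..<n}" for k
    using mod_mult_inverse_cancel[of v u n k] that by simp
  show "(v * ((u * k) mod n)) mod n = k" if "k \<in> {..<n}" for k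
    using mod_mult_inverse_cancel[OF assms, of k] that by simp
qed auto

definition zeta :: "nat \<Rightarrow> complex" where
  "zeta n = exp (- 2 * of_real pi * \<i> / of_nat n)"

lemma zeta_pow_eq_1:
  assumes "n > 0"
  shows "zeta n ^ n = 1"
proof -
  have "zeta n ^ n = exp (of_nat n * (- 2 * of_real pi * \<i> / of_nat n))"
    unfolding zeta_def by (rule exp_of_nat_mult[symmetric])
  also have "\<dots> = exp (- (2 * of_real pi * \<i>))" using assms by simp
  finally show ?thesis by (simp add: exp_minus)
qed

lemma zeta_neq_1:
  assumes "n > 1"
  shows "zeta n \<noteq> 1"
proof
  assume "zeta n = 1"
  then obtain j :: int where "- 2 * pi / n = 2 * j * pi"
    unfolding zeta_def exp_eq_1 by auto
  then have "pi * (- 1) = pi * (real_of_int j * real n)"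
    using assms by (simp add: field_simps)
  then have "real_of_int (- 1) = real_of_int (j * int n)"
    by (simp only: mult_left_cancel[OF pi_neq_zero]) simp
  then have "int n dvd 1" by (metis dvd_minus_iff dvd_triv_right of_int_eq_iff)
  then show False using assms by simp
qed

lemma zeta_pow_mod:
  assumes "n > 0"
  shows "zeta n ^ (j mod n) = zeta n ^ j"
proof -
  have "zeta n ^ j = zeta n ^ (n * (j div n) + j mod n)" by simp
  also have "\<dots> = (zeta n ^ n) ^ (j div n) * zeta n ^ (j mod n)"
    by (simp only: power_add power_mult)
  finally show ?thesis using zeta_pow_eq_1[OF assms] by simp
qed

lemma fourier_eq_sum_zeta_pow:
  assumes "n > 0"
  shows "fourier n \<gamma> u = (\<Sum>k<n. zeta n ^ ((u * k) mod n) * of_real (pmf \<gamma> k))"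
proof -
  have "exp (- 2 * of_real pi * \<i> * of_nat (k * u) / of_nat n)
      = exp (of_nat (u * k) * (- 2 * of_real pi * \<i> / of_nat n))" for k
    by (simp add: field_simps)
  also have "\<dots> k = zeta n ^ ((u * k) mod n)" for k
    by (simp only: zeta_pow_mod[OF assms]) (simp only: zeta_def exp_of_nat_mult)
  finally show ?thesis unfolding fourier_def by simp
qed

lemma fourier_reindex:
  assumes "n > 0" "(u * v) mod n = 1"
  shows "fourier n \<gamma> u = (\<Sum>m<n. zeta n ^ m * of_real (pmf \<gamma> ((v * m) mod n)))"
  using sum.reindex_bij_betw[OF bij_betw_mult_mod[OF assms(2)],
      of "\<lambda>m. zeta n ^ m * of_real (pmf \<gamma> ((v * m) mod n))"]
  by (simp add: fourier_eq_sum_zeta_pow[OF assms(1)] mod_mult_inverse_cancel[OF assms(2)])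

lemma of_real_Rats: "x \<in> \<rat> \<Longrightarrow> (of_real x :: 'a :: real_field) \<in> \<rat>"
  by (auto elim!: Rats_cases')

lemma pmf_mult_invariant_if_fourier_eq:
  assumes "prime n"
    and rational: "\<And>k. pmf \<gamma> k \<in> \<rat>"
    and "x \<in> {1..<n}" "y \<in> {1..<n}"
    and fourier_eq: "fourier n \<gamma> x = fourier n \<gamma> y"
    and "k < n"
  shows "pmf \<gamma> ((zn_inv n x * y * k) mod n) = pmf \<gamma> k"
proof -
  have "n > 1" using assms(1) prime_gt_1_nat by blast
  txt \<open>By \<open>fourier_reindex\<close>, \<open>c\<close> lists the coefficients of \<open>fourier n \<gamma> x - fourier n \<gamma> y\<close>
    as a polynomial in \<open>zeta n\<close>.\<close>
  define c :: "nat \<Rightarrow> complex" where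
    "c m = of_real (pmf \<gamma> ((zn_inv n x * m) mod n) - pmf \<gamma> ((zn_inv n y * m) mod n))" for m
  have "(\<Sum>m<n. c m * zeta n ^ m) = fourier n \<gamma> x - fourier n \<gamma> y"
    using \<open>n > 1\<close> zn_inv(2)[OF assms(1,3)] zn_inv(2)[OF assms(1,4)]
    by (simp add: c_def fourier_reindex sum_subtractf algebra_simps)
  then have "(\<Sum>m<n. c m * zeta n ^ m) = 0" using fourier_eq by simp
  moreover have "\<And>m. c m \<in> \<rat>" using rational by (simp add: c_def of_real_Rats)
  ultimately have c_const: "c m = c (n - 1)" if "m < n" for m
    using rational_relation_root_of_unity_const[OF assms(1) zeta_neq_1[OF \<open>n > 1\<close>]
        zeta_pow_eq_1 _ _ that] \<open>n > 1\<close> by simp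
  have "c 0 = 0" by (simp add: c_def)
  then have "c (n - 1) = 0" using c_const[of 0] \<open>n > 1\<close> by simp
  then have c_zero: "c m = 0" if "m < n" for m
    using c_const[OF that] by simp
  define m where "m = (y * k) mod n"
  have "m < n" using \<open>n > 1\<close> by (simp add: m_def)
  then have "pmf \<gamma> ((zn_inv n x * m) mod n) = pmf \<gamma> ((zn_inv n y * m) mod n)"
    using c_zero[of m] by (simp add: c_def)
  moreover have "(zn_inv n y * m) mod n = k"
    using mod_mult_inverse_cancel[OF zn_inv(2)[OF assms(1,4)]] \<open>k < n\<close> by (simp add: m_def)
  moreover have "(zn_inv n x * m) mod n = (zn_inv n x * y * k) mod n"
    by (simp add: m_def mod_mult_right_eq mult.assoc)
  ultimately show ?thesis by simp
qed

lemma bij_betw_mult_zn_inv: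
  assumes "prime n" "x \<in> {1..<n}" "y \<in> {1..<n}"
  shows "bij_betw (\<lambda>k. (zn_inv n x * y * k) mod n) {..<n} {..<n}"
proof (rule bij_betw_mult_mod)
  have "(zn_inv n x * y * (x * zn_inv n y)) mod n
      = (((x * zn_inv n x) mod n) * ((y * zn_inv n y) mod n)) mod n"
    by (simp add: mod_mult_eq ac_simps)
  then show "(zn_inv n x * y * (x * zn_inv n y)) mod n = 1"
    using zn_inv(2)[OF assms(1,2)] zn_inv(2)[OF assms(1,3)] prime_gt_1_nat[OF assms(1)] by simp
qed

section \<open>Symmetries of the random walk\<close>

lemma pmf_map_inj_on:
  assumes "inj_on f A" "set_pmf M \<subseteq> A" "x \<in> A"
  shows "pmf (map_pmf f M) (f x) = pmf M x"
proof (cases "x \<in> set_pmf M")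
  case True
  then show ?thesis using assms by (intro pmf_map_inj) (auto intro: inj_on_subset)
next
  case False
  then have "f x \<notin> set_pmf (map_pmf f M)" using assms by (auto dest: inj_onD)
  then show ?thesis using False by (metis pmf_eq_0_set_pmf)
qed

lemma map_pmf_eq_self_if_bij_invariant:
  assumes bij: "bij_betw f A A" and "set_pmf M \<subseteq> A"
    and invariant: "\<And>x. x \<in> A \<Longrightarrow> pmf M (f x) = pmf M x"
  shows "map_pmf f M = M"
proof (rule pmf_eqI)
  fix y
  show "pmf (map_pmf f M) y = pmf M y"
  proof (cases "y \<in> A")
    case True
    then obtain x where "x \<in> A" "y = f x" using bij by (auto simp: bij_betw_def)
    then show ?thesis
      using pmf_map_inj_on[OF bij_betw_imp_inj_on[OF bij] assms(2)] invariant by simp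
  next
    case False
    then have "y \<notin> set_pmf (map_pmf f M)" "y \<notin> set_pmf M"
      using bij assms(2) by (auto simp: bij_betw_def)
    then show ?thesis by (simp only: flip: pmf_eq_0_set_pmf)
  qed
qed

lemma map_walk_from:
  assumes "map_pmf f \<gamma> = \<gamma>" and additive: "\<And>v k. f ((v + k) mod n) = (f v + f k) mod n"
  shows "map_pmf (map f) (walk_from n \<gamma> T v) = walk_from n \<gamma> T (f v)"
proof (induction T arbitrary: v)
  case 0
  then show ?case by simp
next
  case (Suc T)
  have "map_pmf (map f) (walk_from n \<gamma> (Suc T) v) = bind_pmf \<gamma>
      (\<lambda>k. map_pmf (\<lambda>vs. f v # vs) (map_pmf (map f) (walk_from n \<gamma> T ((v + k) mod n))))"
    by (simp add: map_bind_pmf map_pmf_comp)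
  also have "\<dots> = bind_pmf \<gamma>
      (\<lambda>k. map_pmf (\<lambda>vs. f v # vs) (walk_from n \<gamma> T ((f v + f k) mod n)))"
    by (simp add: Suc.IH additive)
  also have "\<dots> = bind_pmf (map_pmf f \<gamma>)
      (\<lambda>k. map_pmf (\<lambda>vs. f v # vs) (walk_from n \<gamma> T ((f v + k) mod n)))"
    by (simp add: bind_map_pmf)
  also have "\<dots> = walk_from n \<gamma> (Suc T) (f v)" using assms(1) by simp
  finally show ?case .
qed

lemma map_walk:
  assumes "n > 0" "bij_betw f {..<n} {..<n}"
    and "map_pmf f \<gamma> = \<gamma>" "\<And>v k. f ((v + k) mod n) = (f v + f k) mod n"
  shows "map_pmf (map f) (walk n \<gamma> T) = walk n \<gamma> T"
proof -
  have "map_pmf f (pmf_of_set {..<n}) = pmf_of_set {..<n}"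
    using assms(1,2) map_pmf_of_set_inj[of f "{..<n}"] by (auto simp: bij_betw_def)
  then show ?thesis
    using map_walk_from[OF assms(3,4)]
    by (simp add: walk_def map_bind_pmf flip: bind_map_pmf)
qed

lemma set_walk_from_subset:
  "v < n \<Longrightarrow> xs \<in> set_pmf (walk_from n \<gamma> T v) \<Longrightarrow> set xs \<subseteq> {..<n}"
proof (induction T arbitrary: v xs)
  case (Suc T)
  then obtain k ys where "xs = v # ys" "ys \<in> set_pmf (walk_from n \<gamma> T ((v + k) mod n))"
    by auto
  moreover have "(v + k) mod n < n" using Suc.prems(1) by simp
  ultimately have "set ys \<subseteq> {..<n}" using Suc.IH by blast
  then show ?case using \<open>xs = v # ys\<close> Suc.prems(1) by simp
qed simp

lemma set_walk_subset:
  assumes "n > 0" "xs \<in> set_pmf (walk n \<gamma> T)"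
  shows "set xs \<subseteq> {..<n}"
proof -
  have "{..<n} \<noteq> {}" using assms(1) by auto
  then obtain v where "v < n" "xs \<in> set_pmf (walk_from n \<gamma> T v)"
    using assms(2) by (auto simp: walk_def set_pmf_of_set)
  then show ?thesis by (rule set_walk_from_subset)
qed

lemma walk_mult_invariant_if_fourier_eq:
  assumes "prime n" "set_pmf \<gamma> \<subseteq> {..<n}" "\<And>k. pmf \<gamma> k \<in> \<rat>"
    and "x \<in> {1..<n}" "y \<in> {1..<n}" "fourier n \<gamma> x = fourier n \<gamma> y"
  shows "map_pmf (map (\<lambda>k. (zn_inv n x * y * k) mod n)) (walk n \<gamma> T) = walk n \<gamma> T"
proof (rule map_walk)
  show "n > 0" using assms(1) prime_gt_0_nat by blast
  show bij: "bij_betw (\<lambda>k. (zn_inv n x * y * k) mod n) {..<n} {..<n}"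
    using assms(1,4,5) by (rule bij_betw_mult_zn_inv)
  show "map_pmf (\<lambda>k. (zn_inv n x * y * k) mod n) \<gamma> = \<gamma>"
    using map_pmf_eq_self_if_bij_invariant[OF bij assms(2)]
      pmf_mult_invariant_if_fourier_eq[OF assms(1,3-6)] by simp
  show "(zn_inv n x * y * ((v + k) mod n)) mod n
      = ((zn_inv n x * y * v) mod n + (zn_inv n x * y * k) mod n) mod n" for v k
    by (simp add: mod_mult_right_eq mod_add_eq distrib_left)
qed

theorem lemma2:
  fixes n :: nat and \<gamma> :: "nat pmf" and x y :: nat and f1 f2 :: "nat \<Rightarrow> nat"
  assumes "prime n" and "n > 5"
    and "set_pmf \<gamma> \<subseteq> {..<n}"
    and "\<forall>k. pmf \<gamma> k \<in> \<rat>"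
    and "x \<in> {1..<n}" and "y \<in> {1..<n}"
    and "fourier n \<gamma> x = fourier n \<gamma> y"
    and "\<forall>k<n. f1 k \<in> {0, 1} \<and> f2 k \<in> {0, 1}"
    and "\<forall>k<n. f1 k = f2 ((zn_inv n x * y * k) mod n)"
  shows "\<forall>T. map_pmf (map f1) (walk n \<gamma> T) = map_pmf (map f2) (walk n \<gamma> T)"
proof
  fix T
  let ?\<mu> = "\<lambda>k. (zn_inv n x * y * k) mod n"
  have "n > 0" using assms(2) by simp
  have "map_pmf (map f1) (walk n \<gamma> T) = map_pmf (map f2 \<circ> map ?\<mu>) (walk n \<gamma> T)"
  proof (rule map_pmf_cong[OF refl])
    fix xs assume "xs \<in> set_pmf (walk n \<gamma> T)"
    then have "set xs \<subseteq> {..<n}" by (rule set_walk_subset[OF \<open>n > 0\<close>])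
    then show "map f1 xs = (map f2 \<circ> map ?\<mu>) xs" using assms(9) by auto
  qed
  also have "\<dots> = map_pmf (map f2) (map_pmf (map ?\<mu>) (walk n \<gamma> T))"
    by (simp add: map_pmf_comp)
  also have "\<dots> = map_pmf (map f2) (walk n \<gamma> T)"
    using walk_mult_invariant_if_fourier_eq[OF assms(1,3) _ assms(5-7)] assms(4) by simp
  finally show "map_pmf (map f1) (walk n \<gamma> T) = map_pmf (map f2) (walk n \<gamma> T)" .
qed

end
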